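(* Let $K\ge 1$ and $r$ be integers such that $K-r$ is a positive divisor of $K$, and put $g=\frac{K}{K-r}$. For integers $a,b$ write $(a)_b$ for $a \bmod b$. For $k\in[0,g)$ let $\mathcal{C}_k=\{(k+ig)_K : i\in[0,K-r)\}$. Consider the data shuffling problem (described in the context) with $K$ nodes $[0,K)$, $K$ messages $V_0,\dots,V_{K-1}$, where node $k$ wants $V_k$ and knows the messages with indices in $\mathcal{S}_k=[0,K)\setminus\{(k+ig)_K : i\in[0,K-r)\}$, and node $k$ broadcasts over a noiseless link of capacity $C_k\ge 0$. Then the capacity region of this problem equals $$\Big\{(R_k : k\in[0,K))\in\mathbb{R}_{+}^{K} \;:\; \sum_{i\in[0,K-r)} R_{(k+ig)_K} \le \sum_{j\in[0,K)\setminus \mathcal{C}_k} C_j \ \text{ for all } k\in[0,g)\Big\}.$$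
   Context: Notation: $[a,b)=\{a,a+1,\dots,b-1\}$ and $[n]=\{1,\dots,n\}$. Origin of the problem (MapReduce distributed computing): $N$ input files are split into $g$ disjoint batches $B_0,\dots,B_{g-1}$; node $k\in[0,K)$ stores every batch except $B_{(k)_g}$ and computes intermediate values of all output functions from its stored files. Each node $k$ is assigned a disjoint set $\mathcal{W}_k$ of output functions (all of equal size) and must obtain the message $V_k$, the concatenation of the intermediate values of the functions in $\mathcal{W}_k$ computed from the files of batch $B_{(k)_g}$. Thus node $k$ knows $V_j$ exactly when $(j)_g\neq(k)_g$, i.e. when $j\in\mathcal{S}_k=[0,K)\setminus\{(k+ig)_K: i\in[0,K-r)\}$. (Here $r$ is the computation load, the total number of batch copies stored divided by the number of batches.) Data shuffling code: the messages $V_k$, $k\in[0,K)$, are independent, with $V_k$ uniformly distributed on $[2^{nR_k}]$, where $n$ is the blocklength and $R_k\ge 0$ the rate. A $((2^{nR_k})_{k},(2^{nC_k})_k,n)$ code consists of an encoder at each node $k$ mapping the messages $(V_j: j\in\mathcal{S}_k)$ to a codeword $Y_k\in[2^{nC_k}]$ broadcast to all other nodes, and a decoder at each node $k$ mapping $(Y_j : j\in[0,K)\setminus\{k\})$ together with its side information $(V_j: j\in\mathcal{S}_k)$ to an estimate $\hat V_k$. The error probability is $P_e^{(n)}=\Pr[(\hat V_k)_k\neq (V_k)_k]$. A rate tuple $(R_k)_k$ is achievable for link capacities $(C_k)_k$ if there is a sequence of such codes with $P_e^{(n)}\to 0$ as $n\to\infty$; the capacity region is the closure of the set of achievable rate tuples.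 *)

theory Defs
  imports "HOL-Analysis.Analysis"
begin

text \<open>Data shuffling problem with K nodes, computation load r, g = K div (K - r).
  Rate / capacity tuples are functions nat => real; only indices below K matter.\<close>

definition grp :: "nat \<Rightarrow> nat \<Rightarrow> nat" where
  "grp K r = K div (K - r)"

definition cls :: "nat \<Rightarrow> nat \<Rightarrow> nat \<Rightarrow> nat set" where
  "cls K r k = {(k + i * grp K r) mod K | i. i < K - r}"

definition side :: "nat \<Rightarrow> nat \<Rightarrow> nat \<Rightarrow> nat set" where
  "side K r k = {0..<K} - cls K r k"

definition msg_size :: "nat \<Rightarrow> real \<Rightarrow> nat" where
  "msg_size n x = nat \<lceil>2 powr (real n * x)\<rceil>"

definition cw_size :: "nat \<Rightarrow> real \<Rightarrow> nat" where
  "cw_size n x = nat \<lfloor>2 powr (real n * x)\<rfloor>"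

definition msgs :: "nat \<Rightarrow> (nat \<Rightarrow> real) \<Rightarrow> nat \<Rightarrow> (nat \<Rightarrow> nat) set" where
  "msgs K R n = PiE {0..<K} (\<lambda>k. {0..<msg_size n (R k)})"

definition is_code :: "nat \<Rightarrow> nat \<Rightarrow> (nat \<Rightarrow> real) \<Rightarrow> (nat \<Rightarrow> real) \<Rightarrow> nat
    \<Rightarrow> (nat \<Rightarrow> (nat \<Rightarrow> nat) \<Rightarrow> nat)
    \<Rightarrow> (nat \<Rightarrow> (nat \<Rightarrow> nat) \<Rightarrow> (nat \<Rightarrow> nat) \<Rightarrow> nat) \<Rightarrow> bool" where
  "is_code K r C R n enc dec \<longleftrightarrow>
     (\<forall>k<K. \<forall>v v'. (\<forall>j\<in>side K r k. v j = v' j) \<longrightarrow> enc k v = enc k v') \<and>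
     (\<forall>k<K. \<forall>v\<in>msgs K R n. enc k v < cw_size n (C k)) \<and>
     (\<forall>k<K. \<forall>y y' v v'. (\<forall>j<K. j \<noteq> k \<longrightarrow> y j = y' j) \<longrightarrow>
         (\<forall>j\<in>side K r k. v j = v' j) \<longrightarrow> dec k y v = dec k y' v')"

text \<open>error probability under independent uniform messages\<close>
definition err_prob :: "nat \<Rightarrow> (nat \<Rightarrow> real) \<Rightarrow> nat
    \<Rightarrow> (nat \<Rightarrow> (nat \<Rightarrow> nat) \<Rightarrow> nat)
    \<Rightarrow> (nat \<Rightarrow> (nat \<Rightarrow> nat) \<Rightarrow> (nat \<Rightarrow> nat) \<Rightarrow> nat) \<Rightarrow> real" where
  "err_prob K R n enc dec =
     real (card {v \<in> msgs K R n. \<exists>k<K. dec k (\<lambda>j. enc j v) v \<noteq> v k})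
     / real (card (msgs K R n))"

definition achievable :: "nat \<Rightarrow> nat \<Rightarrow> (nat \<Rightarrow> real) \<Rightarrow> (nat \<Rightarrow> real) \<Rightarrow> bool" where
  "achievable K r C R \<longleftrightarrow>
     (\<forall>k<K. 0 \<le> R k) \<and> (\<forall>k\<ge>K. R k = 0) \<and>
     (\<exists>enc dec. (\<forall>n. is_code K r C R n (enc n) (dec n)) \<and>
        (\<lambda>n. err_prob K R n (enc n) (dec n)) \<longlonglongrightarrow> 0)"

definition capacity_region :: "nat \<Rightarrow> nat \<Rightarrow> (nat \<Rightarrow> real) \<Rightarrow> (nat \<Rightarrow> real) set" where
  "capacity_region K r C = closure {R. achievable K r C R}"

end

theory Submission
  imports Defs
begin

text \<open>
  The residues modulo \<open>g = K div (K - r)\<close> split the nodes into \<open>g\<close> classes \<open>cls K r k\<close>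
  of size \<open>K - r\<close>; every node of a class wants a message of its own class and knows
  all messages of the other classes, i.e. those indexed by \<open>side K r k\<close>.

  Converse: the nodes of class \<open>k\<close> all transmit functions of the messages in
  \<open>side K r k\<close>, so a correctly decoded message tuple is determined by these messages
  together with the transmissions of the nodes in \<open>side K r k\<close>. Counting shows that
  the probability of correct decoding is at most
  \<open>2 powr (n * (\<Sum>j\<in>side K r k. C j) - n * (\<Sum>j\<in>cls K r k. R j))\<close>, which tends to
  \<open>0\<close> unless the class inequality holds.

  Achievability: if \<open>\<Sum>j\<in>cls K r k. R j < \<Sum>j\<in>side K r k. C j\<close>, then for large \<open>n\<close>
  class \<open>k\<close> has an injective codebook from its messages into the codeword tuples of the
  nodes outside the class. Every node sends the sum, modulo its codeword alphabet size,
  of its entries in the codebooks of all classes but its own; a receiver subtracts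
  the entries of the classes it knows and inverts the codebook of its own class, so the
  error probability is eventually zero. Scaling a point of the region by \<open>t < 1\<close> makes
  the inequalities strict, and the region is closed.
\<close>

section \<open>Residue classes\<close>

lemma residue_orbit_eq:
  fixes g h k :: nat
  assumes "0 < g"
  shows "{(k + i * g) mod (g * h) | i. i < h} = {x. x < g * h \<and> x mod g = k mod g}"
proof (intro set_eqI iffI)
  fix x assume "x \<in> {(k + i * g) mod (g * h) | i. i < h}"
  then obtain i where "i < h" and x: "x = (k + i * g) mod (g * h)" by blast
  then show "x \<in> {x. x < g * h \<and> x mod g = k mod g}"
    using assms by (simp add: mod_mod_cancel)
next
  fix x assume "x \<in> {x. x < g * h \<and> x mod g = k mod g}"
  then have x: "x < g * h" and "int x mod int g = int k mod int g"
    by (auto simp flip: of_nat_mod)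
  then have "int g dvd int x - int k" by (simp add: mod_eq_dvd_iff)
  then obtain t :: int where t: "int x = int k + t * int g"
    by (metis dvdE diff_add_cancel add.commute mult.commute)
  have h: "0 < h" using x by (cases h) auto
  define i where "i = nat (t mod int h)"
  have "int i = t - t div int h * int h"
    using h by (simp add: i_def minus_div_mult_eq_mod)
  then have "int (k + i * g) = int k + (t - t div int h * int h) * int g"
    by simp
  also have "\<dots> = int x + (- (t div int h)) * int (g * h)"
    using t by (simp add: algebra_simps)
  finally have "int (k + i * g) = int x + (- (t div int h)) * int (g * h)" .
  then have "(k + i * g) mod (g * h) = x"
    using x by (metis mod_mult_self1 mod_less nat_int of_nat_mod)
  moreover have "i < h" using h by (simp add: i_def nat_less_iff)
  ultimately show "x \<in> {(k + i * g) mod (g * h) | i. i < h}" by blast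
qed

lemma inj_on_residue_orbit:
  fixes g h k :: nat
  assumes "0 < g"
  shows "inj_on (\<lambda>i. (k + i * g) mod (g * h)) {..<h}"
proof (rule inj_onI)
  fix i j assume "i \<in> {..<h}" "j \<in> {..<h}" and "(k + i * g) mod (g * h) = (k + j * g) mod (g * h)"
  then have ij: "int i < int h" "int j < int h"
    and "int (k + i * g) mod int (g * h) = int (k + j * g) mod int (g * h)"
    by (simp_all only: of_nat_less_iff lessThan_iff flip: of_nat_mod)
  then have "int g * int h dvd int g * (int i - int j)"
    by (simp add: mod_eq_dvd_iff algebra_simps)
  then have "int h dvd int i - int j"
    using assms by simp
  moreover have "\<bar>int i - int j\<bar> < int h"
    using ij by linarith
  ultimately show "i = j"
    using dvd_imp_le_int[of "int i - int j" "int h"] by fastforce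
qed

lemma cls_inter_side: "cls K r k \<inter> side K r k = {}"
  unfolding side_def by blast

lemma finite_side: "finite (side K r k)"
  unfolding side_def by simp

locale data_shuffling =
  fixes K r :: nat
  assumes load_less: "r < K" and dvd_nodes: "(K - r) dvd K"
begin

lemma grp_mult: "grp K r * (K - r) = K"
  using dvd_nodes unfolding grp_def by simp

lemma grp_pos: "0 < grp K r"
  using grp_mult load_less by (cases "grp K r") auto

lemma cls_eq: "cls K r k = {x. x < K \<and> x mod grp K r = k mod grp K r}"
  using residue_orbit_eq[OF grp_pos, of k "K - r"] unfolding cls_def grp_mult .

lemma side_eq: "side K r k = {x. x < K \<and> x mod grp K r \<noteq> k mod grp K r}"
  unfolding side_def cls_eq by auto

lemma finite_cls: "finite (cls K r k)"
  unfolding cls_eq by simp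

lemma cls_Un_side: "cls K r k \<union> side K r k = {0..<K}"
  unfolding cls_eq side_eq by auto

lemma mem_cls_self: "k < K \<Longrightarrow> k \<in> cls K r k"
  unfolding cls_eq by simp

lemma cls_mod_grp: "cls K r (k mod grp K r) = cls K r k"
  unfolding cls_eq by simp

lemma side_mod_grp: "side K r (k mod grp K r) = side K r k"
  unfolding side_def cls_mod_grp ..

lemma side_eq_if_mem_cls: "i \<in> cls K r k \<Longrightarrow> side K r i = side K r k"
  unfolding cls_eq side_eq by auto

lemma cls_subset_side: "k mod grp K r \<noteq> j mod grp K r \<Longrightarrow> cls K r k \<subseteq> side K r j"
  unfolding cls_eq side_eq by auto

lemma sum_cls_orbit: "(\<Sum>i<K - r. f ((k + i * grp K r) mod K)) = (\<Sum>j\<in>cls K r k. f j)"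
proof -
  have orbit: "cls K r k = (\<lambda>i. (k + i * grp K r) mod K) ` {..<K - r}"
    unfolding cls_def by auto
  show ?thesis
    unfolding orbit sum.reindex[OF inj_on_residue_orbit[OF grp_pos, of k "K - r", unfolded grp_mult]]
    by simp
qed

end

section \<open>Message and codeword set sizes\<close>

lemma msg_size_pos: "0 < msg_size n x"
  unfolding msg_size_def by simp

lemma msg_size_zero: "msg_size n 0 = 1"
  unfolding msg_size_def by simp

lemma msg_size_ge: "2 powr (real n * x) \<le> real (msg_size n x)"
  unfolding msg_size_def by simp

lemma msg_size_le:
  assumes "0 \<le> x"
  shows "real (msg_size n x) \<le> 2 * 2 powr (real n * x)"
proof -
  have "1 \<le> 2 powr (real n * x)"
    using assms by (intro ge_one_powr_ge_zero) simp_all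
  then show ?thesis
    unfolding msg_size_def by linarith
qed

lemma cw_size_le: "real (cw_size n x) \<le> 2 powr (real n * x)"
  unfolding cw_size_def by simp

lemma cw_size_ge:
  assumes "0 \<le> x"
  shows "2 powr (real n * x) \<le> 2 * real (cw_size n x)"
proof -
  define y where "y = 2 powr (real n * x)"
  have "1 \<le> y"
    unfolding y_def using assms by (intro ge_one_powr_ge_zero) simp_all
  then have "1 \<le> \<lfloor>y\<rfloor>" and "y - 1 < of_int \<lfloor>y\<rfloor>"
    by linarith+
  moreover have "real (cw_size n x) = of_int \<lfloor>y\<rfloor>"
    unfolding cw_size_def y_def[symmetric] using \<open>1 \<le> \<lfloor>y\<rfloor>\<close> by simp
  ultimately show ?thesis
    unfolding y_def[symmetric] by linarith
qed

lemma cw_size_pos: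
  assumes "0 \<le> x"
  shows "0 < cw_size n x"
proof -
  have "1 \<le> 2 powr (real n * x)"
    using assms by (intro ge_one_powr_ge_zero) simp_all
  then show ?thesis
    unfolding cw_size_def by simp
qed

lemma prod_msg_size_ge: "2 powr (real n * sum R A) \<le> (\<Prod>j\<in>A. real (msg_size n (R j)))"
  unfolding sum_distrib_left powr_sum[of 2, simplified] by (intro prod_mono) (simp add: msg_size_ge)

lemma prod_msg_size_le:
  assumes "finite A" and "\<forall>j\<in>A. 0 \<le> R j"
  shows "(\<Prod>j\<in>A. real (msg_size n (R j))) \<le> 2 ^ card A * 2 powr (real n * sum R A)"
proof -
  have "(\<Prod>j\<in>A. real (msg_size n (R j))) \<le> (\<Prod>j\<in>A. 2 * 2 powr (real n * R j))"
    using assms(2) by (intro prod_mono) (simp add: msg_size_le)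
  then show ?thesis
    using assms(1) by (simp add: prod.distrib sum_distrib_left powr_sum)
qed

lemma prod_cw_size_le: "(\<Prod>i\<in>B. real (cw_size n (C i))) \<le> 2 powr (real n * sum C B)"
  unfolding sum_distrib_left powr_sum[of 2, simplified] by (intro prod_mono) (simp add: cw_size_le)

lemma prod_cw_size_ge:
  assumes "finite B" and "\<forall>i\<in>B. 0 \<le> C i"
  shows "2 powr (real n * sum C B) \<le> 2 ^ card B * (\<Prod>i\<in>B. real (cw_size n (C i)))"
proof -
  have "(\<Prod>i\<in>B. 2 powr (real n * C i)) \<le> (\<Prod>i\<in>B. 2 * real (cw_size n (C i)))"
    using assms(2) by (intro prod_mono) (simp add: cw_size_ge)
  then show ?thesis
    using assms(1) by (simp add: prod.distrib sum_distrib_left powr_sum)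
qed

lemma eventually_prod_msg_size_le_prod_cw_size:
  assumes "finite A" and "finite B" and "\<forall>j\<in>A. 0 \<le> R j" and "\<forall>i\<in>B. 0 \<le> C i"
    and "sum R A < sum C B \<or> (\<forall>j\<in>A. R j = 0)"
  shows "eventually (\<lambda>n. (\<Prod>j\<in>A. msg_size n (R j)) \<le> (\<Prod>i\<in>B. cw_size n (C i))) sequentially"
proof -
  have c_ge_1: "1 \<le> (\<Prod>i\<in>B. cw_size n (C i))" for n
    using assms(4) cw_size_pos by (intro prod_ge_1) (simp add: Suc_le_eq)
  consider "\<forall>j\<in>A. R j = 0" | "sum R A < sum C B"
    using assms(5) by blast
  then show ?thesis
  proof cases
    case 1
    then show ?thesis
      using c_ge_1 by (simp add: msg_size_zero)
  next
    case 2
    define d where "d = sum C B - sum R A"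
    have "1 < 2 powr d"
      using 2 unfolding d_def by simp
    then obtain N where N: "2 ^ (card A + card B) < (2 powr d) ^ N"
      using real_arch_pow by blast
    show ?thesis
      unfolding eventually_sequentially
    proof (intro exI allI impI)
      fix n assume "N \<le> n"
      then have "(2 powr d) ^ N \<le> (2 powr d) ^ n"
        using \<open>1 < 2 powr d\<close> by (intro power_increasing) simp_all
      also have "\<dots> = 2 powr (real n * d)"
        by (simp add: powr_realpow[symmetric] powr_powr mult.commute)
      finally have "(2::real) ^ card A * 2 ^ card B \<le> 2 powr (real n * d)"
        using N by (simp add: power_add)
      then have bound: "2 ^ card A * 2 powr (real n * sum R A) * 2 ^ card B \<le> 2 powr (real n * sum C B)"
        by (simp add: d_def powr_diff pos_le_divide_eq algebra_simps)
      have "(\<Prod>j\<in>A. real (msg_size n (R j))) * 2 ^ card B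
          \<le> 2 ^ card A * 2 powr (real n * sum R A) * 2 ^ card B"
        using prod_msg_size_le[OF assms(1,3)] by (rule mult_right_mono) simp
      also have "\<dots> \<le> 2 ^ card B * (\<Prod>i\<in>B. real (cw_size n (C i)))"
        using bound prod_cw_size_ge[OF assms(2,4)] by (rule order_trans)
      finally show "(\<Prod>j\<in>A. msg_size n (R j)) \<le> (\<Prod>i\<in>B. cw_size n (C i))"
        by (simp flip: of_nat_prod)
    qed
  qed
qed

section \<open>Converse\<close>

definition decoded_msgs :: "nat \<Rightarrow> (nat \<Rightarrow> real) \<Rightarrow> nat
    \<Rightarrow> (nat \<Rightarrow> (nat \<Rightarrow> nat) \<Rightarrow> nat)
    \<Rightarrow> (nat \<Rightarrow> (nat \<Rightarrow> nat) \<Rightarrow> (nat \<Rightarrow> nat) \<Rightarrow> nat) \<Rightarrow> (nat \<Rightarrow> nat) set" where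
  "decoded_msgs K R n enc dec = {v \<in> msgs K R n. \<forall>k<K. dec k (\<lambda>j. enc j v) v = v k}"

lemma finite_msgs: "finite (msgs K R n)"
  unfolding msgs_def by (simp add: finite_PiE)

lemma card_msgs: "card (msgs K R n) = (\<Prod>k\<in>{0..<K}. msg_size n (R k))"
  unfolding msgs_def by (simp add: card_PiE)

lemma err_prob_eq:
  "err_prob K R n enc dec = 1 - card (decoded_msgs K R n enc dec) / card (msgs K R n)"
proof -
  let ?M = "msgs K R n" and ?S = "decoded_msgs K R n enc dec"
  have "{v \<in> ?M. \<exists>k<K. dec k (\<lambda>j. enc j v) v \<noteq> v k} = ?M - ?S"
    unfolding decoded_msgs_def by blast
  moreover have "?S \<subseteq> ?M"
    unfolding decoded_msgs_def by blast
  then have "card (?M - ?S) = card ?M - card ?S" and "card ?S \<le> card ?M"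
    using finite_msgs by (simp_all add: card_Diff_subset card_mono finite_subset)
  moreover have "card ?M \<noteq> 0"
    unfolding card_msgs using msg_size_pos by (simp add: prod_pos)
  ultimately show ?thesis
    unfolding err_prob_def by (simp add: diff_divide_distrib)
qed

context data_shuffling
begin

lemma decoded_msgs_determined:
  assumes code: "is_code K r C R n enc dec"
    and v: "v \<in> decoded_msgs K R n enc dec" and v': "v' \<in> decoded_msgs K R n enc dec"
    and side_agree: "\<forall>i\<in>side K r k. v i = v' i \<and> enc i v = enc i v'"
  shows "v = v'"
proof
  have enc_dep: "\<And>i. i < K \<Longrightarrow> \<forall>j\<in>side K r i. v j = v' j \<Longrightarrow> enc i v = enc i v'"
    and dec_dep: "\<And>j y y'. j < K \<Longrightarrow> \<forall>i<K. i \<noteq> j \<longrightarrow> y i = y' i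
        \<Longrightarrow> \<forall>i\<in>side K r j. v i = v' i \<Longrightarrow> dec j y v = dec j y' v'"
    using code unfolding is_code_def by blast+
  have in_cls: "i \<in> cls K r k" if "i < K" "i \<notin> side K r k" for i
    using that cls_Un_side[of k] by auto
  have enc_eq: "enc i v = enc i v'" if "i < K" for i
  proof (cases "i \<in> side K r k")
    case False
    then have "side K r i = side K r k"
      using in_cls that side_eq_if_mem_cls by blast
    then show ?thesis
      using enc_dep that side_agree by simp
  qed (use side_agree in blast)
  fix j
  consider "j \<ge> K" | "j \<in> side K r k" | "j \<in> cls K r k" "j < K"
    using in_cls by (metis not_le)
  then show "v j = v' j"
  proof cases
    case 1
    moreover have "v \<in> msgs K R n" and "v' \<in> msgs K R n"
      using v v' unfolding decoded_msgs_def by blast+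
    ultimately show ?thesis
      unfolding msgs_def by (metis PiE_arb atLeastLessThan_iff not_le)
  next
    case 2
    then show ?thesis
      using side_agree by blast
  next
    case 3
    then have "dec j (\<lambda>i. enc i v) v = dec j (\<lambda>i. enc i v') v'"
      using dec_dep enc_eq side_agree side_eq_if_mem_cls by simp
    then show ?thesis
      using v v' \<open>j < K\<close> unfolding decoded_msgs_def by simp
  qed
qed

lemma card_decoded_msgs_le:
  assumes code: "is_code K r C R n enc dec"
  shows "card (decoded_msgs K R n enc dec)
    \<le> (\<Prod>j\<in>side K r k. msg_size n (R j)) * (\<Prod>i\<in>side K r k. cw_size n (C i))"
proof -
  let ?D = "side K r k" and ?S = "decoded_msgs K R n enc dec"
  let ?T = "PiE ?D (\<lambda>j. {0..<msg_size n (R j)}) \<times> PiE ?D (\<lambda>i. {0..<cw_size n (C i)})"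
  define \<Phi> where "\<Phi> v = (restrict v ?D, restrict (\<lambda>i. enc i v) ?D)" for v
  have "inj_on \<Phi> ?S"
  proof (rule inj_onI)
    fix v v' assume "v \<in> ?S" "v' \<in> ?S" and "\<Phi> v = \<Phi> v'"
    moreover from \<open>\<Phi> v = \<Phi> v'\<close> have "\<forall>i\<in>?D. v i = v' i \<and> enc i v = enc i v'"
      unfolding \<Phi>_def by (metis prod.inject restrict_apply')
    ultimately show "v = v'"
      using decoded_msgs_determined[OF code] by blast
  qed
  moreover have "\<Phi> ` ?S \<subseteq> ?T"
  proof
    fix w assume "w \<in> \<Phi> ` ?S"
    then obtain v where "v \<in> msgs K R n" and w: "w = \<Phi> v"
      unfolding decoded_msgs_def by blast
    moreover have "?D \<subseteq> {0..<K}"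
      unfolding side_def by blast
    ultimately show "w \<in> ?T"
      using code unfolding \<Phi>_def msgs_def is_code_def by (auto simp: PiE_iff)
  qed
  moreover have "finite ?T"
    by (simp add: finite_PiE finite_side)
  ultimately have "card ?S \<le> card ?T"
    by (metis card_image card_mono)
  then show ?thesis
    by (simp add: card_cartesian_product card_PiE finite_side)
qed

lemma err_prob_ge:
  assumes "is_code K r C R n enc dec"
  shows "1 - (\<Prod>i\<in>side K r k. real (cw_size n (C i))) / (\<Prod>j\<in>cls K r k. real (msg_size n (R j)))
    \<le> err_prob K R n enc dec"
proof -
  let ?m = "\<lambda>A. \<Prod>j\<in>A. real (msg_size n (R j))"
  let ?c = "\<Prod>i\<in>side K r k. real (cw_size n (C i))"
  have m_pos: "0 < ?m A" for A
    by (simp add: prod_pos msg_size_pos)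
  have c_nonneg: "0 \<le> ?c"
    by (simp add: prod_nonneg)
  have "real (card (msgs K R n)) = ?m (cls K r k) * ?m (side K r k)"
    unfolding card_msgs cls_Un_side[symmetric, of k]
    by (simp add: prod.union_disjoint finite_cls finite_side cls_inter_side)
  moreover have "real (card (decoded_msgs K R n enc dec)) \<le> ?m (side K r k) * ?c"
    using card_decoded_msgs_le[OF assms, of k] by (simp flip: of_nat_mult of_nat_prod)
  ultimately have "real (card (decoded_msgs K R n enc dec)) / card (msgs K R n) \<le> ?c / ?m (cls K r k)"
    using m_pos c_nonneg by (simp add: divide_simps mult.commute)
  then show ?thesis
    unfolding err_prob_eq by linarith
qed

lemma achievable_imp_sum_le:
  assumes "achievable K r C R"
  shows "(\<Sum>j\<in>cls K r k. R j) \<le> (\<Sum>j\<in>side K r k. C j)"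
proof (rule ccontr)
  define d where "d = (\<Sum>j\<in>side K r k. C j) - (\<Sum>j\<in>cls K r k. R j)"
  assume "\<not> ?thesis"
  then have "2 powr d < 1"
    unfolding d_def by (intro powr_less_one) simp_all
  obtain enc dec where code: "\<And>n. is_code K r C R n (enc n) (dec n)"
    and err: "(\<lambda>n. err_prob K R n (enc n) (dec n)) \<longlonglongrightarrow> 0"
    using assms unfolding achievable_def by blast
  have "1 - (2 powr d) ^ n \<le> err_prob K R n (enc n) (dec n)" for n
  proof -
    have "(\<Prod>i\<in>side K r k. real (cw_size n (C i))) / (\<Prod>j\<in>cls K r k. real (msg_size n (R j)))
        \<le> 2 powr (real n * (\<Sum>j\<in>side K r k. C j)) / 2 powr (real n * (\<Sum>j\<in>cls K r k. R j))"
      by (intro frac_le prod_nonneg prod_cw_size_le prod_msg_size_ge) simp_all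
    also have "\<dots> = (2 powr d) ^ n"
      by (simp add: d_def powr_realpow[symmetric] powr_powr powr_diff[symmetric] algebra_simps)
    finally show ?thesis
      using err_prob_ge[OF code[of n], where k=k] by linarith
  qed
  moreover have "(\<lambda>n. 1 - (2 powr d) ^ n) \<longlonglongrightarrow> 1 - 0"
    using \<open>2 powr d < 1\<close> by (intro tendsto_diff tendsto_const LIMSEQ_realpow_zero) simp_all
  ultimately have "1 - 0 \<le> (0::real)"
    using err by (intro LIMSEQ_le) auto
  then show False by simp
qed

end

section \<open>Superposition coding\<close>

lemma nat_mod_diff_mod_add:
  fixes a b c :: nat
  assumes "a < c"
  shows "nat ((int ((a + b) mod c) - int b) mod int c) = a"
proof -
  have "(int ((a + b) mod c) - int b) mod int c = ((int a + int b) mod int c - int b) mod int c"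
    by (simp add: of_nat_mod)
  also have "\<dots> = int a"
    using assms by (simp add: mod_diff_left_eq)
  finally show ?thesis by simp
qed

text \<open>
  A codebook \<open>\<phi> k\<close> of class \<open>k\<close> maps message tuples on \<open>cls K r k\<close> to tuples indexed by
  the nodes outside the class; \<open>interference K r \<phi> A i v\<close> is the sum of the entries for
  node \<open>i\<close> over all classes not in \<open>A\<close>, and \<open>c i\<close> is the codeword alphabet size of node \<open>i\<close>.
\<close>

definition interference :: "nat \<Rightarrow> nat \<Rightarrow> (nat \<Rightarrow> (nat \<Rightarrow> nat) \<Rightarrow> nat \<Rightarrow> nat)
    \<Rightarrow> nat set \<Rightarrow> nat \<Rightarrow> (nat \<Rightarrow> nat) \<Rightarrow> nat" where
  "interference K r \<phi> A i v = (\<Sum>k\<in>{..<grp K r} - A. \<phi> k (restrict v (cls K r k)) i)"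

definition superposition_enc :: "nat \<Rightarrow> nat \<Rightarrow> (nat \<Rightarrow> nat) \<Rightarrow> (nat \<Rightarrow> (nat \<Rightarrow> nat) \<Rightarrow> nat \<Rightarrow> nat)
    \<Rightarrow> nat \<Rightarrow> (nat \<Rightarrow> nat) \<Rightarrow> nat" where
  "superposition_enc K r c \<phi> i v = interference K r \<phi> {i mod grp K r} i v mod c i"

definition superposition_dec :: "nat \<Rightarrow> nat \<Rightarrow> (nat \<Rightarrow> nat) \<Rightarrow> (nat \<Rightarrow> nat)
    \<Rightarrow> (nat \<Rightarrow> (nat \<Rightarrow> nat) \<Rightarrow> nat \<Rightarrow> nat) \<Rightarrow> nat \<Rightarrow> (nat \<Rightarrow> nat) \<Rightarrow> (nat \<Rightarrow> nat) \<Rightarrow> nat" where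
  "superposition_dec K r m c \<phi> j y v =
    (let k = j mod grp K r in
     inv_into (PiE (cls K r k) (\<lambda>l. {0..<m l})) (\<phi> k)
       (\<lambda>i\<in>side K r j. nat ((int (y i) - int (interference K r \<phi> {k, i mod grp K r} i v)) mod int (c i)))
       j)"

definition codebooks :: "nat \<Rightarrow> nat \<Rightarrow> (nat \<Rightarrow> nat) \<Rightarrow> (nat \<Rightarrow> nat)
    \<Rightarrow> (nat \<Rightarrow> (nat \<Rightarrow> nat) \<Rightarrow> nat \<Rightarrow> nat) \<Rightarrow> bool" where
  "codebooks K r m c \<phi> \<longleftrightarrow> (\<forall>k<grp K r.
     inj_on (\<phi> k) (PiE (cls K r k) (\<lambda>j. {0..<m j})) \<and>
     \<phi> k ` PiE (cls K r k) (\<lambda>j. {0..<m j}) \<subseteq> PiE (side K r k) (\<lambda>i. {0..<c i}))"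

lemma codebooksD:
  assumes "codebooks K r m c \<phi>" and "k < grp K r"
  shows "inj_on (\<phi> k) (PiE (cls K r k) (\<lambda>j. {0..<m j}))"
    and "\<phi> k ` PiE (cls K r k) (\<lambda>j. {0..<m j}) \<subseteq> PiE (side K r k) (\<lambda>i. {0..<c i})"
  using assms unfolding codebooks_def by blast+

context data_shuffling
begin

lemma interference_cong:
  assumes "j mod grp K r \<in> A" and "\<forall>x\<in>side K r j. v x = v' x"
  shows "interference K r \<phi> A i v = interference K r \<phi> A i v'"
proof -
  have "restrict v (cls K r k) = restrict v' (cls K r k)" if "k \<in> {..<grp K r} - A" for k
    using that assms cls_subset_side[of k j] by (intro restrict_ext) auto
  then show ?thesis
    unfolding interference_def by (intro sum.cong) simp_all
qed

lemma interference_split: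
  assumes "k < grp K r" and "k \<noteq> i mod grp K r"
  shows "interference K r \<phi> {i mod grp K r} i v
    = \<phi> k (restrict v (cls K r k)) i + interference K r \<phi> {k, i mod grp K r} i v"
proof -
  have "{..<grp K r} - {k, i mod grp K r} = {..<grp K r} - {i mod grp K r} - {k}"
    by blast
  then show ?thesis
    unfolding interference_def using assms by (simp add: sum.remove)
qed

lemma is_code_superposition:
  assumes "\<forall>i<K. 0 \<le> C i"
  shows "is_code K r C R n (superposition_enc K r (\<lambda>i. cw_size n (C i)) \<phi>)
    (superposition_dec K r m (\<lambda>i. cw_size n (C i)) \<phi>)"
  unfolding is_code_def
proof (intro conjI allI impI ballI)
  fix k and v v' :: "nat \<Rightarrow> nat" assume "\<forall>j\<in>side K r k. v j = v' j"
  then have "interference K r \<phi> {k mod grp K r} k v = interference K r \<phi> {k mod grp K r} k v'"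
    by (intro interference_cong) simp_all
  then show "superposition_enc K r (\<lambda>i. cw_size n (C i)) \<phi> k v = superposition_enc K r (\<lambda>i. cw_size n (C i)) \<phi> k v'"
    unfolding superposition_enc_def by simp
next
  fix k v assume "k < K"
  then show "superposition_enc K r (\<lambda>i. cw_size n (C i)) \<phi> k v < cw_size n (C k)"
    unfolding superposition_enc_def using assms cw_size_pos by simp
next
  fix k and y y' v v' :: "nat \<Rightarrow> nat" assume "k < K" and y: "\<forall>j<K. j \<noteq> k \<longrightarrow> y j = y' j"
    and v: "\<forall>j\<in>side K r k. v j = v' j"
  have "y i = y' i" if "i \<in> side K r k" for i
    using that y unfolding side_eq by auto
  moreover have "interference K r \<phi> {k mod grp K r, i mod grp K r} i v
      = interference K r \<phi> {k mod grp K r, i mod grp K r} i v'" for i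
    using v by (intro interference_cong) auto
  ultimately show "superposition_dec K r m (\<lambda>i. cw_size n (C i)) \<phi> k y v
      = superposition_dec K r m (\<lambda>i. cw_size n (C i)) \<phi> k y' v'"
    unfolding superposition_dec_def Let_def by (intro arg_cong[where f="\<lambda>w. inv_into _ _ w k"] restrict_ext) simp
qed

lemma superposition_dec_correct:
  assumes \<phi>: "codebooks K r m c \<phi>" and v: "v \<in> PiE {0..<K} (\<lambda>j. {0..<m j})" and "j < K"
  shows "superposition_dec K r m c \<phi> j (\<lambda>i. superposition_enc K r c \<phi> i v) v = v j"
proof -
  define k where "k = j mod grp K r"
  define u where "u = restrict v (cls K r k)"
  have "k < grp K r"
    unfolding k_def using grp_pos by simp
  have u: "u \<in> PiE (cls K r k) (\<lambda>l. {0..<m l})"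
    unfolding u_def using v cls_Un_side[of k] by (auto simp: PiE_iff)
  then have "\<phi> k u \<in> PiE (side K r k) (\<lambda>i. {0..<c i})"
    using codebooksD(2)[OF \<phi> \<open>k < grp K r\<close>] by blast
  then have w: "\<phi> k u \<in> PiE (side K r j) (\<lambda>i. {0..<c i})"
    unfolding k_def side_mod_grp .
  have "(\<lambda>i\<in>side K r j. nat ((int (superposition_enc K r c \<phi> i v)
        - int (interference K r \<phi> {k, i mod grp K r} i v)) mod int (c i))) = \<phi> k u"
  proof (rule ext)
    fix i
    show "(\<lambda>i\<in>side K r j. nat ((int (superposition_enc K r c \<phi> i v)
        - int (interference K r \<phi> {k, i mod grp K r} i v)) mod int (c i))) i = \<phi> k u i"
    proof (cases "i \<in> side K r j")
      case True
      then have "k \<noteq> i mod grp K r"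
        unfolding k_def side_eq by simp
      then show ?thesis
        using True w \<open>k < grp K r\<close>
        by (simp add: superposition_enc_def interference_split u_def nat_mod_diff_mod_add PiE_iff)
    next
      case False
      then show ?thesis
        using w by (simp add: PiE_def extensional_def)
    qed
  qed
  then have "superposition_dec K r m c \<phi> j (\<lambda>i. superposition_enc K r c \<phi> i v) v = u j"
    unfolding superposition_dec_def Let_def k_def[symmetric]
    using codebooksD(1)[OF \<phi> \<open>k < grp K r\<close>] u by simp
  also have "u j = v j"
    unfolding u_def k_def cls_mod_grp using mem_cls_self \<open>j < K\<close> by simp
  finally show ?thesis .
qed

lemma codebooks_exist:
  assumes "\<forall>k<grp K r. (\<Prod>j\<in>cls K r k. m j) \<le> (\<Prod>i\<in>side K r k. c i)"
  shows "\<exists>\<phi>. codebooks K r m c \<phi>"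
proof -
  have "\<exists>f. inj_on f (PiE (cls K r k) (\<lambda>j. {0..<m j}))
      \<and> f ` PiE (cls K r k) (\<lambda>j. {0..<m j}) \<subseteq> PiE (side K r k) (\<lambda>i. {0..<c i})"
    if "k < grp K r" for k
    using that assms card_le_inj[of "PiE (cls K r k) (\<lambda>j. {0..<m j})" "PiE (side K r k) (\<lambda>i. {0..<c i})"]
    by (auto simp: card_PiE finite_PiE finite_cls finite_side)
  then show ?thesis
    unfolding codebooks_def by metis
qed

lemma err_prob_superposition:
  assumes "codebooks K r (\<lambda>j. msg_size n (R j)) c \<phi>"
  shows "err_prob K R n (superposition_enc K r c \<phi>) (superposition_dec K r (\<lambda>j. msg_size n (R j)) c \<phi>) = 0"
proof -
  have "decoded_msgs K R n (superposition_enc K r c \<phi>) (superposition_dec K r (\<lambda>j. msg_size n (R j)) c \<phi>)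
      = msgs K R n"
    using superposition_dec_correct[OF assms] unfolding decoded_msgs_def msgs_def by blast
  then show ?thesis
    unfolding err_prob_eq using msg_size_pos by (simp add: card_msgs prod_pos)
qed

lemma achievable_if_sum_less:
  assumes C: "\<forall>k<K. 0 \<le> C k" and R: "\<forall>k<K. 0 \<le> R k" "\<forall>k\<ge>K. R k = 0"
    and less: "\<forall>k<grp K r. (\<Sum>j\<in>cls K r k. R j) < (\<Sum>j\<in>side K r k. C j) \<or> (\<forall>j\<in>cls K r k. R j = 0)"
  shows "achievable K r C R"
proof -
  let ?m = "\<lambda>n j. msg_size n (R j)" and ?c = "\<lambda>n i. cw_size n (C i)"
  define \<phi> where "\<phi> n = (SOME \<phi>. codebooks K r (?m n) (?c n) \<phi>)" for n
  have "eventually (\<lambda>n. \<forall>k\<in>{..<grp K r}.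
      (\<Prod>j\<in>cls K r k. ?m n j) \<le> (\<Prod>i\<in>side K r k. ?c n i)) sequentially"
    using less C R unfolding cls_eq side_eq
    by (intro eventually_ball_finite ballI eventually_prod_msg_size_le_prod_cw_size) auto
  moreover have "codebooks K r (?m n) (?c n) (\<phi> n)"
    if "\<forall>k\<in>{..<grp K r}. (\<Prod>j\<in>cls K r k. ?m n j) \<le> (\<Prod>i\<in>side K r k. ?c n i)" for n
  proof -
    have "\<exists>\<phi>. codebooks K r (?m n) (?c n) \<phi>"
      using that by (intro codebooks_exist) simp
    then show ?thesis
      unfolding \<phi>_def by (rule someI_ex)
  qed
  ultimately have codebooks_ev: "eventually (\<lambda>n. codebooks K r (?m n) (?c n) (\<phi> n)) sequentially"
    by (rule eventually_mono)
  define enc where "enc n = superposition_enc K r (?c n) (\<phi> n)" for n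
  define dec where "dec n = superposition_dec K r (?m n) (?c n) (\<phi> n)" for n
  have "eventually (\<lambda>n. err_prob K R n (enc n) (dec n) = 0) sequentially"
    unfolding enc_def dec_def using codebooks_ev by (rule eventually_mono) (rule err_prob_superposition)
  then have "(\<lambda>n. err_prob K R n (enc n) (dec n)) \<longlonglongrightarrow> 0"
    by (rule tendsto_eventually)
  moreover have "\<forall>n. is_code K r C R n (enc n) (dec n)"
    unfolding enc_def dec_def using is_code_superposition[OF C] by blast
  ultimately show ?thesis
    unfolding achievable_def using R by blast
qed

end

section \<open>The capacity region\<close>

definition rate_region :: "nat \<Rightarrow> nat \<Rightarrow> (nat \<Rightarrow> real) \<Rightarrow> (nat \<Rightarrow> real) set" where
  "rate_region K r C = {R. (\<forall>k<K. 0 \<le> R k) \<and> (\<forall>k\<ge>K. R k = 0) \<and>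
     (\<forall>k<grp K r. (\<Sum>j\<in>cls K r k. R j) \<le> (\<Sum>j\<in>side K r k. C j))}"

lemma closed_rate_region: "closed (rate_region K r C)"
  unfolding rate_region_def
  by (intro closed_Collect_conj closed_Collect_all closed_Collect_imp open_Collect_const
      closed_Collect_le closed_Collect_eq continuous_on_sum continuous_on_const
      continuous_on_product_coordinates)

lemma mem_closure_if_scaled_mem:
  fixes x :: "'a \<Rightarrow> real"
  assumes "\<And>t. 0 \<le> t \<Longrightarrow> t < 1 \<Longrightarrow> (\<lambda>j. t * x j) \<in> S"
  shows "x \<in> closure S"
proof -
  define t where "t n = 1 - inverse (real (Suc n))" for n
  have "t \<longlonglongrightarrow> 1 - 0"
    unfolding t_def by (intro tendsto_diff tendsto_const LIMSEQ_inverse_real_of_nat)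
  moreover have "continuous_on UNIV (\<lambda>s. \<lambda>j. s * x j)"
    by (intro continuous_on_coordinatewise_then_product continuous_intros)
  ultimately have "(\<lambda>n. \<lambda>j. t n * x j) \<longlonglongrightarrow> (\<lambda>j. 1 * x j)"
    by (intro continuous_on_tendsto_compose[where f="\<lambda>s. \<lambda>j. s * x j"]) auto
  moreover have "0 \<le> t n" and "t n < 1" for n
    unfolding t_def by (simp_all add: field_simps)
  ultimately show ?thesis
    using assms by (intro Lim_in_closed_set[OF closed_closure])
      (auto intro!: always_eventually closure_subset[THEN subsetD])
qed

context data_shuffling
begin

lemma achievable_scaled:
  assumes C: "\<forall>k<K. 0 \<le> C k" and R: "R \<in> rate_region K r C" and "0 \<le> t" "t < 1"
  shows "achievable K r C (\<lambda>j. t * R j)"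
proof (rule achievable_if_sum_less[OF C])
  show "\<forall>k<K. 0 \<le> t * R k" and "\<forall>k\<ge>K. t * R k = 0"
    using R \<open>0 \<le> t\<close> unfolding rate_region_def by simp_all
  show "\<forall>k<grp K r. (\<Sum>j\<in>cls K r k. t * R j) < (\<Sum>j\<in>side K r k. C j)
      \<or> (\<forall>j\<in>cls K r k. t * R j = 0)"
  proof (intro allI impI)
    fix k assume "k < grp K r"
    have R_nonneg: "\<forall>j\<in>cls K r k. 0 \<le> R j"
      using R unfolding rate_region_def cls_eq by simp
    show "(\<Sum>j\<in>cls K r k. t * R j) < (\<Sum>j\<in>side K r k. C j) \<or> (\<forall>j\<in>cls K r k. t * R j = 0)"
    proof (cases "\<forall>j\<in>cls K r k. R j = 0")
      case False
      then have "0 < (\<Sum>j\<in>cls K r k. R j)"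
        using R_nonneg finite_cls sum_nonneg_eq_0_iff by (metis order_less_le sum_nonneg)
      then have "t * (\<Sum>j\<in>cls K r k. R j) < (\<Sum>j\<in>cls K r k. R j)"
        using \<open>t < 1\<close> by simp
      also have "\<dots> \<le> (\<Sum>j\<in>side K r k. C j)"
        using R \<open>k < grp K r\<close> unfolding rate_region_def by blast
      finally show ?thesis
        by (simp add: sum_distrib_left)
    qed simp
  qed
qed

lemma capacity_region_eq_rate_region:
  assumes "\<forall>k<K. 0 \<le> C k"
  shows "capacity_region K r C = rate_region K r C"
proof
  have "R \<in> rate_region K r C" if "achievable K r C R" for R
    using that achievable_imp_sum_le[OF that] unfolding rate_region_def achievable_def by blast
  then have "{R. achievable K r C R} \<subseteq> rate_region K r C"
    by blast
  then show "capacity_region K r C \<subseteq> rate_region K r C"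
    unfolding capacity_region_def by (rule closure_minimal[OF _ closed_rate_region])
  show "rate_region K r C \<subseteq> capacity_region K r C"
    unfolding capacity_region_def
    using achievable_scaled[OF assms] by (auto intro: mem_closure_if_scaled_mem)
qed

end

theorem mainTheorem1:
  fixes K r :: nat and C :: "nat \<Rightarrow> real"
  assumes "K \<ge> 1" and "r < K" and "(K - r) dvd K"
    and "\<forall>k<K. 0 \<le> C k"
  shows "capacity_region K r C =
    {R. (\<forall>k<K. 0 \<le> R k) \<and> (\<forall>k\<ge>K. R k = 0) \<and>
        (\<forall>k < grp K r. (\<Sum>i<K - r. R ((k + i * grp K r) mod K))
                          \<le> (\<Sum>j\<in>{0..<K} - cls K r k. C j))}"
proof -
  interpret data_shuffling K r
    \<comment> \<open>\<open>K \<ge> 1\<close> is implied by \<open>r < K\<close>.\<close>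
    using assms(2,3) by unfold_locales
  show ?thesis
    unfolding capacity_region_eq_rate_region[OF assms(4)] rate_region_def side_def sum_cls_orbit ..
qed

end
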